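(* Let $G$ be a finite graph. Then there exist a positive integer $n$ and a modular sumset labeling $f:V(G)\to\mathscr{P}(\mathbb{Z}_n)$ of $G$. Moreover, there exist a positive integer $n$ and a modular sumset indexer $f:V(G)\to\mathscr{P}(\mathbb{Z}_n)$ of $G$.
   Context: Graphs are simple and finite, without isolated vertices. For a positive integer $n$, $\mathbb{Z}_n$ denotes the set of non-negative integers modulo $n$ and $\mathscr{P}(\mathbb{Z}_n)$ its power set. For $A,B\subseteq\mathbb{Z}_n$ the modular sumset is $A+B=\{x\in\mathbb{Z}_n : x\equiv a+b \pmod n \text{ for some } a\in A,\ b\in B\}$. A modular sumset labeling of $G$ is an injective function $f:V(G)\to\mathscr{P}(\mathbb{Z}_n)$ assigning non-empty subsets to vertices, with induced edge function $f^+:E(G)\to\mathscr{P}(\mathbb{Z}_n)$, $f^+(uv)=f(u)+f(v)$. A modular sumset indexer is a modular sumset labeling $f$ whose induced function $f^+$ is also injective. *)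

theory Defs
  imports Main
begin

definition simple_graph :: "'v set \<Rightarrow> 'v set set \<Rightarrow> bool" where
  "simple_graph V E \<longleftrightarrow> finite V \<and> (\<forall>e\<in>E. e \<subseteq> V \<and> card e = 2)
     \<and> (\<forall>v\<in>V. \<exists>e\<in>E. v \<in> e)"

text \<open>Z_n is represented as {0..<n} :: nat set; subsets of Z_n as subsets of it.\<close>
definition mod_sumset :: "nat \<Rightarrow> nat set \<Rightarrow> nat set \<Rightarrow> nat set" where
  "mod_sumset n A B = {x \<in> {..<n}. \<exists>a\<in>A. \<exists>b\<in>B. x = (a + b) mod n}"

definition edge_label :: "nat \<Rightarrow> ('v \<Rightarrow> nat set) \<Rightarrow> 'v set \<Rightarrow> nat set" where
  "edge_label n f e = (THE S. \<exists>u v. e = {u, v} \<and> u \<noteq> v \<and> S = mod_sumset n (f u) (f v))"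

definition modular_sumset_labeling :: "'v set \<Rightarrow> 'v set set \<Rightarrow> nat \<Rightarrow> ('v \<Rightarrow> nat set) \<Rightarrow> bool" where
  "modular_sumset_labeling V E n f \<longleftrightarrow>
     (\<forall>v\<in>V. f v \<noteq> {} \<and> f v \<subseteq> {..<n}) \<and> inj_on f V"

definition modular_sumset_indexer :: "'v set \<Rightarrow> 'v set set \<Rightarrow> nat \<Rightarrow> ('v \<Rightarrow> nat set) \<Rightarrow> bool" where
  "modular_sumset_indexer V E n f \<longleftrightarrow>
     modular_sumset_labeling V E n f \<and> inj_on (edge_label n f) E"

end

theory Submission
  imports Defs
begin

text \<open>Number the vertices injectively by \<open>h : V \<rightarrow> {0..<N}\<close> and label \<open>w\<close> by
  \<open>{0, N + h w}\<close> in \<open>\<int>\<^sub>n\<close> with \<open>n \<ge> 4N\<close>. No sum wraps around, so the edge \<open>uv\<close>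
  receives \<open>{0, N + h u, N + h v, 2N + h u + h v}\<close>, whose elements in \<open>[N, 2N)\<close> are
  exactly the labels of its two endpoints; hence distinct edges get distinct sumsets.\<close>

lemma mod_sumset_commute: "mod_sumset n A B = mod_sumset n B A"
  unfolding mod_sumset_def by (metis add.commute)

lemma mod_sumset_zero_pairs:
  assumes "a + b < n"
  shows "mod_sumset n {0, a} {0, b} = {0, a, b, a + b}"
  using assms unfolding mod_sumset_def by auto

lemma edge_label_doubleton:
  assumes "u \<noteq> v"
  shows "edge_label n f {u, v} = mod_sumset n (f u) (f v)"
  unfolding edge_label_def
proof (rule the_equality)
  show "\<exists>x y. {u, v} = {x, y} \<and> x \<noteq> y \<and> mod_sumset n (f u) (f v) = mod_sumset n (f x) (f y)"
    using assms by blast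
next
  fix S assume "\<exists>x y. {u, v} = {x, y} \<and> x \<noteq> y \<and> S = mod_sumset n (f x) (f y)"
  then obtain x y where "{u, v} = {x, y}" "S = mod_sumset n (f x) (f y)" by blast
  then show "S = mod_sumset n (f u) (f v)"
    by (metis doubleton_eq_iff mod_sumset_commute)
qed

definition offset_labeling :: "nat \<Rightarrow> ('v \<Rightarrow> nat) \<Rightarrow> 'v \<Rightarrow> nat set" where
  "offset_labeling N h w = {0, N + h w}"

lemma offset_labeling_is_labeling:
  assumes "inj_on h V" and "\<forall>w\<in>V. h w < N" and "2 * N \<le> n"
  shows "modular_sumset_labeling V E n (offset_labeling N h)"
  unfolding modular_sumset_labeling_def
proof
  show "\<forall>w\<in>V. offset_labeling N h w \<noteq> {} \<and> offset_labeling N h w \<subseteq> {..<n}"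
    using assms(2,3) by (fastforce simp: offset_labeling_def)
  show "inj_on (offset_labeling N h) V"
  proof (rule inj_onI)
    fix x y assume "x \<in> V" "y \<in> V" "offset_labeling N h x = offset_labeling N h y"
    then have "h x = h y"
      using assms(2) by (auto simp: offset_labeling_def doubleton_eq_iff)
    with \<open>x \<in> V\<close> \<open>y \<in> V\<close> show "x = y" using assms(1) by (auto dest: inj_onD)
  qed
qed

lemma edge_label_offset_labeling:
  assumes "u \<noteq> v" and "h u < N" and "h v < N" and "4 * N \<le> n"
  shows "edge_label n (offset_labeling N h) {u, v} = {0, N + h u, N + h v, 2 * N + h u + h v}"
proof -
  have "N + h u + (N + h v) < n" using assms(2-4) by linarith
  then have "mod_sumset n {0, N + h u} {0, N + h v} = {0, N + h u, N + h v, N + h u + (N + h v)}"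
    by (rule mod_sumset_zero_pairs)
  moreover have "N + h u + (N + h v) = 2 * N + h u + h v" by simp
  ultimately show ?thesis
    by (simp only: edge_label_doubleton[OF assms(1)] offset_labeling_def)
qed

lemma endpoints_from_offset_edge_label:
  assumes "inj_on h V" and "\<forall>w\<in>V. h w < N" and "4 * N \<le> n"
    and "u \<in> V" and "v \<in> V" and "u \<noteq> v"
  shows "{w \<in> V. N + h w \<in> edge_label n (offset_labeling N h) {u, v}} = {u, v}"
proof -
  have "N + h w \<noteq> 0" and "N + h w \<noteq> 2 * N + h u + h v" if "w \<in> V" for w
    using assms(2,4) that by fastforce+
  moreover have "w = u" if "w \<in> V" "h w = h u" for w
    using assms(1,4) that by (auto dest: inj_onD)
  moreover have "w = v" if "w \<in> V" "h w = h v" for w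
    using assms(1,5) that by (auto dest: inj_onD)
  ultimately show ?thesis
    using assms(2-6) edge_label_offset_labeling[OF assms(6)]
    by (auto simp del: add_is_0)
qed

lemma offset_labeling_is_indexer:
  assumes "\<forall>e\<in>E. e \<subseteq> V \<and> card e = 2"
    and "inj_on h V" and "\<forall>w\<in>V. h w < N" and "4 * N \<le> n"
  shows "modular_sumset_indexer V E n (offset_labeling N h)"
proof -
  have endpoints: "e = {w \<in> V. N + h w \<in> edge_label n (offset_labeling N h) e}"
    if "e \<in> E" for e
  proof -
    obtain u v where "e = {u, v}" "u \<noteq> v"
      using assms(1) \<open>e \<in> E\<close> by (meson card_2_iff)
    moreover have "u \<in> V" "v \<in> V" using assms(1) \<open>e \<in> E\<close> \<open>e = {u, v}\<close> by auto
    ultimately show ?thesis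
      using endpoints_from_offset_edge_label[OF assms(2-4)] by simp
  qed
  have "inj_on (edge_label n (offset_labeling N h)) E"
  proof (rule inj_onI)
    fix x y assume "x \<in> E" "y \<in> E"
      and "edge_label n (offset_labeling N h) x = edge_label n (offset_labeling N h) y"
    then show "x = y" using endpoints[of x] endpoints[of y] by simp
  qed
  then show ?thesis
    using offset_labeling_is_labeling[OF assms(2,3)] assms(4)
    unfolding modular_sumset_indexer_def by simp
qed

theorem mainTheorem1:
  fixes V :: "'v set" and E :: "'v set set"
  assumes "simple_graph V E"
  shows "(\<exists>n>0. \<exists>f. modular_sumset_labeling V E n f)
       \<and> (\<exists>n>0. \<exists>f. modular_sumset_indexer V E n f)"
proof -
  have "finite V" and edges: "\<forall>e\<in>E. e \<subseteq> V \<and> card e = 2"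
    using assms unfolding simple_graph_def by auto
  obtain h where "bij_betw h V {0..<card V}"
    using ex_bij_betw_finite_nat[OF \<open>finite V\<close>] by blast
  then have "inj_on h V" and "\<forall>w\<in>V. h w < card V"
    by (auto simp: bij_betw_def)
  then have indexer: "modular_sumset_indexer V E (4 * card V + 1) (offset_labeling (card V) h)"
    by (intro offset_labeling_is_indexer[OF edges]) simp_all
  then have "modular_sumset_labeling V E (4 * card V + 1) (offset_labeling (card V) h)"
    unfolding modular_sumset_indexer_def ..
  moreover have "0 < 4 * card V + 1" by simp
  ultimately show ?thesis using indexer by (intro conjI exI)
qed

end
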